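(* Let $n\ge 2$, $m\ge 1$, $k\in\{1,\dots,n-1\}$, $h\in\mathbb{R}$, $W\in\mathbb{R}^{m\times(n-1)}$, $w\in\mathbb{R}^m$, $b\in\mathbb{R}^m$, and let $\sigma:\mathbb{R}\to\mathbb{R}$ be differentiable, with $\underline{\sigma}(x)=(\sigma(x_1),\dots,\sigma(x_m))^T$ for $x\in\mathbb{R}^m$. For $y=(y_1,\dots,y_n)^T\in\mathbb{R}^n$ and $j\in\{1,\dots,n\}$ let $\hat{y}^j=(y_1,\dots,y_{j-1},y_{j+1},\dots,y_n)^T\in\mathbb{R}^{n-1}$, and let $\hat{W}^k=(W_{1k},\dots,W_{mk})^T\in\mathbb{R}^m$ be the $k$-th column of $W$. Define maps $\mathcal{V}_{k,Up}^h,\mathcal{V}_{k,Low}^h:\mathbb{R}^n\to\mathbb{R}^n$ as follows: $Y=\mathcal{V}_{k,Up}^h(y)$ is given by $$Y_k = y_k + h\,(\hat{W}^k)^T\,\mathrm{diag}(w)\,\underline{\sigma}(W\hat{y}^k+b),\qquad Y_i=y_i\ \ (i\neq k),$$ and $Y=\mathcal{V}_{k,Low}^h(y)$ is given by $$Y_{k+1} = y_{k+1} - h\,(\hat{W}^k)^T\,\mathrm{diag}(w)\,\underline{\sigma}(W\hat{y}^{k+1}+b),\qquad Y_i=y_i\ \ (i\neq k+1).$$ Then each of $\mathcal{V}_{k,Up}^h$ and $\mathcal{V}_{k,Low}^h$ is symplectic with respect to the variable pair $(y_k,y_{k+1})$, i.e. for every $y\in\mathbb{R}^n$ the $2\times 2$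 Jacobian matrix $M=\frac{\partial (Y_k,Y_{k+1})}{\partial (y_k,y_{k+1})}(y)$ satisfies $M^T \begin{pmatrix}0&-1\\1&0\end{pmatrix} M=\begin{pmatrix}0&-1\\1&0\end{pmatrix}$, and each map is phase volume-preserving, i.e. $\det\left(\frac{\partial Y}{\partial y}(y)\right)=1$ for all $y\in\mathbb{R}^n$.
   Context: $\mathrm{diag}(w)$ denotes the $m\times m$ diagonal matrix with the entries of $w$ on its diagonal. These maps are the "locally-symplectic modules" (Up and Low modules for the variable pair $(y_k,y_{k+1})$). *)

theory Defs
  imports Complex_Main "Jordan_Normal_Form.Determinant"
begin

text \<open>Vectors/matrices are Jordan_Normal_Form vectors/matrices (0-based internally).
  Paper indices are 1-based: paper coordinate y_j is  y $ (j - 1).\<close>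

definition diagv :: "real vec \<Rightarrow> real mat" where
  "diagv w = mat (dim_vec w) (dim_vec w) (\<lambda>(i,j). if i = j then w $ i else 0)"

text \<open>hat y j: remove the j-th (1-based) coordinate.\<close>
definition hatv :: "real vec \<Rightarrow> nat \<Rightarrow> real vec" where
  "hatv y j = vec (dim_vec y - 1) (\<lambda>i. if i < j - 1 then y $ i else y $ (i + 1))"

definition sigvec :: "(real \<Rightarrow> real) \<Rightarrow> real vec \<Rightarrow> real vec" where
  "sigvec \<sigma> x = map_vec \<sigma> x"

definition layer_term ::
  "real mat \<Rightarrow> real vec \<Rightarrow> real vec \<Rightarrow> (real \<Rightarrow> real) \<Rightarrow> nat \<Rightarrow> nat \<Rightarrow> real vec \<Rightarrow> real" where
  "layer_term W w b \<sigma> k j y = col W (k - 1) \<bullet> (diagv w *\<^sub>v sigvec \<sigma> (W *\<^sub>v hatv y j + b))"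

definition V_up ::
  "real \<Rightarrow> real mat \<Rightarrow> real vec \<Rightarrow> real vec \<Rightarrow> (real \<Rightarrow> real) \<Rightarrow> nat \<Rightarrow> real vec \<Rightarrow> real vec" where
  "V_up h W w b \<sigma> k y = vec (dim_vec y)
     (\<lambda>i. if i = k - 1 then y $ i + h * layer_term W w b \<sigma> k k y else y $ i)"

definition V_low ::
  "real \<Rightarrow> real mat \<Rightarrow> real vec \<Rightarrow> real vec \<Rightarrow> (real \<Rightarrow> real) \<Rightarrow> nat \<Rightarrow> real vec \<Rightarrow> real vec" where
  "V_low h W w b \<sigma> k y = vec (dim_vec y)
     (\<lambda>i. if i = k then y $ i - h * layer_term W w b \<sigma> k (k + 1) y else y $ i)"

definition updv :: "real vec \<Rightarrow> nat \<Rightarrow> real \<Rightarrow> real vec" where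
  "updv y j t = vec (dim_vec y) (\<lambda>i. if i = j then t else y $ i)"

definition pderiv_at :: "(real vec \<Rightarrow> real vec) \<Rightarrow> real vec \<Rightarrow> nat \<Rightarrow> nat \<Rightarrow> real" where
  "pderiv_at F y i j = (THE D. ((\<lambda>t. F (updv y j t) $ i) has_real_derivative D) (at (y $ j)))"

definition partials_exist :: "(real vec \<Rightarrow> real vec) \<Rightarrow> nat \<Rightarrow> real vec \<Rightarrow> bool" where
  "partials_exist F n y \<longleftrightarrow>
     (\<forall>i<n. \<forall>j<n. (\<lambda>t. F (updv y j t) $ i) differentiable (at (y $ j)))"

definition jacobian :: "(real vec \<Rightarrow> real vec) \<Rightarrow> nat \<Rightarrow> real vec \<Rightarrow> real mat" where
  "jacobian F n y = mat n n (\<lambda>(i,j). pderiv_at F y i j)"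

definition jac_pair :: "(real vec \<Rightarrow> real vec) \<Rightarrow> nat \<Rightarrow> real vec \<Rightarrow> real mat" where
  "jac_pair F k y = mat 2 2 (\<lambda>(i,j). pderiv_at F y (k - 1 + i) (k - 1 + j))"

definition Jsymp :: "real mat" where
  "Jsymp = mat_of_rows_list 2 [[0, -1], [1, 0]]"

definition symplectic_pair :: "(real vec \<Rightarrow> real vec) \<Rightarrow> nat \<Rightarrow> real vec \<Rightarrow> bool" where
  "symplectic_pair F k y \<longleftrightarrow> transpose_mat (jac_pair F k y) * Jsymp * jac_pair F k y = Jsymp"

end

theory Submission
  imports Defs
begin

text \<open>Both maps are shears \<open>y \<mapsto> y + G(y) e\<^sub>r\<close> in which \<open>G\<close> does not depend on \<open>y\<^sub>r\<close>
  (for \<open>V_up\<close>, \<open>r = k\<close> and \<open>G\<close> only sees \<open>hat y\<^sup>k\<close>; for \<open>V_low\<close>, \<open>r = k + 1\<close>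
  and \<open>G\<close> only sees \<open>hat y\<^sup>k\<^sup>+\<^sup>1\<close>).
  Hence the Jacobian is the identity except in row \<open>r\<close>, whose diagonal entry is still 1:
  its determinant is 1, and every principal \<open>2 \<times> 2\<close> block is unitriangular, so it has
  determinant 1 too. For \<open>2 \<times> 2\<close> matrices \<open>M\<^sup>T J M = (det M) J\<close>, so these blocks are symplectic.\<close>

lemma det_2x2:
  fixes A :: "'a :: comm_ring_1 mat"
  assumes "A \<in> carrier_mat 2 2"
  shows "det A = A $$ (0,0) * A $$ (1,1) - A $$ (0,1) * A $$ (1,0)"
proof -
  have "det A = (\<Sum>i<2. A $$ (i,0) * cofactor A i 0)"
    using assms by (rule laplace_expansion_column) simp
  also have "\<dots> = A $$ (0,0) * A $$ (1,1) - A $$ (0,1) * A $$ (1,0)"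
    using assms by (simp add: numeral_2_eq_2 cofactor_def det_single mat_delete_def)
  finally show ?thesis .
qed

lemma det_identity_except_row:
  fixes A :: "'a :: comm_ring_1 mat"
  assumes A: "A \<in> carrier_mat n n" and r: "r < n"
    and rows: "\<And>i j. i < n \<Longrightarrow> j < n \<Longrightarrow> i \<noteq> r \<Longrightarrow> A $$ (i,j) = (if i = j then 1 else 0)"
  shows "det A = A $$ (r,r)"
proof -
  have "det A = (\<Sum>i<n. A $$ (i,r) * cofactor A i r)"
    using A r by (rule laplace_expansion_column)
  also have "\<dots> = A $$ (r,r) * cofactor A r r"
    using r rows by (subst sum.remove[of _ r]) (auto intro: sum.neutral)
  also have "mat_delete A r r = 1\<^sub>m (n - 1)"
    using A r by (auto simp: mat_delete_def rows)
  then have "cofactor A r r = 1"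
    by (simp add: cofactor_def)
  finally show ?thesis by simp
qed

lemma transpose_mult_Jsymp_mult:
  fixes M :: "real mat"
  assumes "M \<in> carrier_mat 2 2"
  shows "transpose_mat M * Jsymp * M = det M \<cdot>\<^sub>m Jsymp"
proof -
  have J: "Jsymp \<in> carrier_mat 2 2" "Jsymp $$ (0,0) = 0" "Jsymp $$ (0,1) = -1"
    "Jsymp $$ (1,0) = 1" "Jsymp $$ (1,1) = 0"
    by (auto simp: Jsymp_def mat_of_rows_list_def)
  have sum_2: "(\<Sum>i\<in>{0..<2}. f i) = f 0 + f 1" for f :: "nat \<Rightarrow> real"
    by (simp add: numeral_2_eq_2)
  show ?thesis
    using assms J
    by (intro eq_matI) (auto simp: det_2x2 less_2_cases_iff scalar_prod_def sum_2 algebra_simps)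
qed

lemma symplectic_pair_iff_det_jac_pair:
  "symplectic_pair F k y \<longleftrightarrow> det (jac_pair F k y) = 1"
proof -
  have "jac_pair F k y \<in> carrier_mat 2 2"
    by (simp add: jac_pair_def)
  moreover have "c \<cdot>\<^sub>m Jsymp = Jsymp \<longleftrightarrow> c = 1" for c :: real
    by (auto simp: Jsymp_def mat_of_rows_list_def dest!: arg_cong[where f = "\<lambda>A. A $$ (1,0)"])
  ultimately show ?thesis
    by (simp add: symplectic_pair_def transpose_mult_Jsymp_mult)
qed

lemma pderiv_at_eqI:
  "((\<lambda>t. F (updv y j t) $ i) has_real_derivative D) (at (y $ j)) \<Longrightarrow> pderiv_at F y i j = D"
  unfolding pderiv_at_def by (blast intro: the_equality DERIV_unique)

lemma differentiable_If_const:
  "(c \<Longrightarrow> f differentiable F) \<Longrightarrow> (\<not> c \<Longrightarrow> g differentiable F) \<Longrightarrow>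
    (\<lambda>t. if c then f t else g t) differentiable F"
  by (cases c) auto

definition shear_map :: "nat \<Rightarrow> (real vec \<Rightarrow> real) \<Rightarrow> real vec \<Rightarrow> real vec" where
  "shear_map r G y = vec (dim_vec y) (\<lambda>i. if i = r then y $ i + G y else y $ i)"

lemma shear_map_updv_nth:
  "i < dim_vec y \<Longrightarrow> shear_map r G (updv y j t) $ i =
     (if i = j then t else y $ i) + (if i = r then G (updv y j t) else 0)"
  by (simp add: shear_map_def updv_def)

lemma partials_exist_shear_map:
  assumes "y \<in> carrier_vec n"
    and "\<And>j. j < n \<Longrightarrow> (\<lambda>t. G (updv y j t)) differentiable (at (y $ j))"
  shows "partials_exist (shear_map r G) n y"
  unfolding partials_exist_def
proof (intro allI impI)
  fix i j assume "i < n" "j < n"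
  then show "(\<lambda>t. shear_map r G (updv y j t) $ i) differentiable (at (y $ j))"
    using assms by (auto simp: shear_map_updv_nth intro!: differentiable_add differentiable_If_const)
qed

lemma pderiv_at_shear_map:
  assumes "y \<in> carrier_vec n" "i < n" "j < n" "i \<noteq> r \<or> j = r"
    and "\<And>t. G (updv y r t) = G y"
  shows "pderiv_at (shear_map r G) y i j = (if i = j then 1 else 0)"
proof (rule pderiv_at_eqI)
  have "shear_map r G (updv y j t) $ i =
      (if i = j then t else y $ i) + (if i = r then G y else 0)" for t
    using assms by (auto simp: shear_map_updv_nth)
  then show "((\<lambda>t. shear_map r G (updv y j t) $ i) has_real_derivative (if i = j then 1 else 0))
      (at (y $ j))"
    by (simp only:) (auto intro!: derivative_eq_intros)
qed

lemma det_jacobian_shear_map: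
  assumes "y \<in> carrier_vec n" "r < n" "\<And>t. G (updv y r t) = G y"
  shows "det (jacobian (shear_map r G) n y) = 1"
  using assms
  by (subst det_identity_except_row[where r = r]) (auto simp: jacobian_def pderiv_at_shear_map)

lemma symplectic_pair_shear_map:
  assumes "y \<in> carrier_vec n" "1 \<le> k" "k < n" "\<And>t. G (updv y r t) = G y"
  shows "symplectic_pair (shear_map r G) k y"
proof -
  obtain l where k: "k = Suc l"
    using assms(2) by (cases k) auto
  let ?p = "pderiv_at (shear_map r G) y"
  have diag: "?p l l = 1" "?p (Suc l) (Suc l) = 1"
    using assms k by (auto simp: pderiv_at_shear_map)
  have "?p l (Suc l) = 0 \<or> ?p (Suc l) l = 0"
    using assms k by (cases "r = l") (auto simp: pderiv_at_shear_map)
  then show ?thesis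
    by (auto simp: symplectic_pair_iff_det_jac_pair det_2x2 jac_pair_def k diag)
qed

lemma shear_map_symplectic_volume_preserving:
  assumes "y \<in> carrier_vec n" "1 \<le> k" "k < n" "r < n"
    and "\<And>t. G (updv y r t) = G y"
    and "\<And>j. j < n \<Longrightarrow> (\<lambda>t. G (updv y j t)) differentiable (at (y $ j))"
  shows "partials_exist (shear_map r G) n y \<and> symplectic_pair (shear_map r G) k y
    \<and> det (jacobian (shear_map r G) n y) = 1"
  using assms
  by (simp add: partials_exist_shear_map symplectic_pair_shear_map det_jacobian_shear_map)

lemma hatv_updv_removed: "1 \<le> j \<Longrightarrow> hatv (updv y (j - 1) t) j = hatv y j"
  by (rule eq_vecI) (auto simp: hatv_def updv_def)

lemma layer_term_updv_removed:
  "1 \<le> j \<Longrightarrow> layer_term W w b \<sigma> k j (updv y (j - 1) t) = layer_term W w b \<sigma> k j y"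
  by (simp only: layer_term_def hatv_updv_removed)

lemma layer_term_updv_differentiable:
  assumes "W \<in> carrier_mat m l" "b \<in> carrier_vec m"
    and "\<And>x. \<sigma> differentiable (at x)"
  shows "(\<lambda>t. layer_term W w b \<sigma> k j (updv y i t)) differentiable (at x)"
  using assms(1,2)
  by (auto simp: layer_term_def scalar_prod_def diagv_def sigvec_def hatv_def updv_def
      intro!: differentiable_sum differentiable_mult differentiable_compose[OF assms(3)]
        differentiable_add differentiable_If_const)

lemma V_up_eq_shear_map:
  "V_up h W w b \<sigma> k = shear_map (k - 1) (\<lambda>y. h * layer_term W w b \<sigma> k k y)"
  by (simp add: fun_eq_iff V_up_def shear_map_def)

lemma V_low_eq_shear_map:
  "V_low h W w b \<sigma> k = shear_map k (\<lambda>y. - h * layer_term W w b \<sigma> k (k + 1) y)"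
  by (rule ext) (simp add: V_low_def shear_map_def cong: if_cong)

lemma V_up_symplectic_volume_preserving:
  assumes "1 \<le> k" "k < n" "W \<in> carrier_mat m l" "b \<in> carrier_vec m"
    and "\<And>x. \<sigma> differentiable (at x)" and y: "y \<in> carrier_vec n"
  shows "partials_exist (V_up h W w b \<sigma> k) n y \<and> symplectic_pair (V_up h W w b \<sigma> k) k y
    \<and> det (jacobian (V_up h W w b \<sigma> k) n y) = 1"
  unfolding V_up_eq_shear_map
  using assms(1,2) layer_term_updv_removed[OF assms(1)]
  by (intro shear_map_symplectic_volume_preserving[OF y] differentiable_mult differentiable_const
      layer_term_updv_differentiable[OF assms(3-5)]) simp_all

lemma V_low_symplectic_volume_preserving:
  assumes "1 \<le> k" "k < n" "W \<in> carrier_mat m l" "b \<in> carrier_vec m"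
    and "\<And>x. \<sigma> differentiable (at x)" and y: "y \<in> carrier_vec n"
  shows "partials_exist (V_low h W w b \<sigma> k) n y \<and> symplectic_pair (V_low h W w b \<sigma> k) k y
    \<and> det (jacobian (V_low h W w b \<sigma> k) n y) = 1"
  unfolding V_low_eq_shear_map
  using assms(1,2) layer_term_updv_removed[of "k + 1"]
  by (intro shear_map_symplectic_volume_preserving[OF y] differentiable_mult differentiable_const
      layer_term_updv_differentiable[OF assms(3-5)]) simp_all

theorem mainTheorem1:
  fixes n m k :: nat and h :: real and W :: "real mat" and w b :: "real vec"
    and \<sigma> :: "real \<Rightarrow> real"
  assumes "n \<ge> 2" and "m \<ge> 1" and "1 \<le> k" and "k \<le> n - 1"
    and "W \<in> carrier_mat m (n - 1)" and "w \<in> carrier_vec m" and "b \<in> carrier_vec m"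
    and "\<And>x. \<sigma> differentiable (at x)"
  shows "\<forall>y \<in> carrier_vec n.
           partials_exist (V_up h W w b \<sigma> k) n y
         \<and> symplectic_pair (V_up h W w b \<sigma> k) k y
         \<and> det (jacobian (V_up h W w b \<sigma> k) n y) = 1
         \<and> partials_exist (V_low h W w b \<sigma> k) n y
         \<and> symplectic_pair (V_low h W w b \<sigma> k) k y
         \<and> det (jacobian (V_low h W w b \<sigma> k) n y) = 1"
proof -
  have "k < n"
    using assms(3,4) by simp
  then show ?thesis
    using V_up_symplectic_volume_preserving[OF assms(3) _ assms(5,7,8)]
      V_low_symplectic_volume_preserving[OF assms(3) _ assms(5,7,8)]
    by blast
qed

end
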